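(* Let $G\in\mathcal{G}_{2n}$ with $F(G)=n-1$. Then $G\in\mathcal{K}^+_{n,n}$ if and only if $G$ contains an independent set of size $n$. If $G\notin\mathcal{K}^+_{n,n}$, then $G$ is a brick, and hence $G$ is $1$-extendable.
   Context: All graphs are finite and simple. $\mathcal{G}_{2n}$ denotes the set of all graphs with $2n$ vertices that have a perfect matching. For a perfect matching $M$ of $G$, a forcing set of $M$ is a subset $S\subseteq M$ contained in no other perfect matching of $G$; $f(G,M)$ is the minimum size of a forcing set of $M$, and $F(G)$ is the maximum of $f(G,M)$ over all perfect matchings $M$. $\mathcal{K}^+_{n,n}$ is the family of graphs obtained from the complete bipartite graph $K_{n,n}$ by adding arbitrary (possibly no) additional edges whose both ends lie in the same one of the two partite sets (all added edges within one fixed partite set). A graph is bicritical if it has an edge and $G-u-v$ has a perfect matching for every pair of distinct vertices $u,v$; a brick is a $3$-connected bicritical graph. A connected graph with at least $2l+2$ vertices is $l$-extendable if it has a perfect matching and every matching of size $l$ is contained in a perfect matching. *)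

theory Defs
  imports Main
begin

definition simple_graph :: "'a set \<Rightarrow> 'a set set \<Rightarrow> bool" where
  "simple_graph V E \<longleftrightarrow> finite V \<and>
     (\<forall>e\<in>E. \<exists>u v. u \<in> V \<and> v \<in> V \<and> u \<noteq> v \<and> e = {u, v})"

definition matching :: "'a set set \<Rightarrow> 'a set set \<Rightarrow> bool" where
  "matching E M \<longleftrightarrow> M \<subseteq> E \<and> (\<forall>e1\<in>M. \<forall>e2\<in>M. e1 \<noteq> e2 \<longrightarrow> e1 \<inter> e2 = {})"

definition perfect_matching :: "'a set \<Rightarrow> 'a set set \<Rightarrow> 'a set set \<Rightarrow> bool" where
  "perfect_matching V E M \<longleftrightarrow> matching E M \<and> \<Union>M = V"

definition has_perfect_matching :: "'a set \<Rightarrow> 'a set set \<Rightarrow> bool" where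
  "has_perfect_matching V E \<longleftrightarrow> (\<exists>M. perfect_matching V E M)"

definition in_G2n :: "nat \<Rightarrow> 'a set \<Rightarrow> 'a set set \<Rightarrow> bool" where
  "in_G2n n V E \<longleftrightarrow> simple_graph V E \<and> card V = 2 * n \<and> has_perfect_matching V E"

definition forcing_set :: "'a set \<Rightarrow> 'a set set \<Rightarrow> 'a set set \<Rightarrow> 'a set set \<Rightarrow> bool" where
  "forcing_set V E M S \<longleftrightarrow> S \<subseteq> M \<and>
     (\<forall>M'. perfect_matching V E M' \<and> S \<subseteq> M' \<longrightarrow> M' = M)"

definition forcing_number :: "'a set \<Rightarrow> 'a set set \<Rightarrow> 'a set set \<Rightarrow> nat" where
  "forcing_number V E M = Min {card S | S. forcing_set V E M S}"

definition max_forcing_number :: "'a set \<Rightarrow> 'a set set \<Rightarrow> nat" where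
  "max_forcing_number V E = Max {forcing_number V E M | M. perfect_matching V E M}"

definition in_Kplus :: "nat \<Rightarrow> 'a set \<Rightarrow> 'a set set \<Rightarrow> bool" where
  "in_Kplus n V E \<longleftrightarrow> (\<exists>A B. A \<inter> B = {} \<and> A \<union> B = V \<and> card A = n \<and> card B = n \<and>
     (\<forall>a\<in>A. \<forall>b\<in>B. {a, b} \<in> E) \<and>
     (\<forall>e\<in>E. e \<subseteq> A \<or> (\<exists>a\<in>A. \<exists>b\<in>B. e = {a, b})))"

definition independent_set :: "'a set \<Rightarrow> 'a set set \<Rightarrow> 'a set \<Rightarrow> bool" where
  "independent_set V E I \<longleftrightarrow> I \<subseteq> V \<and> (\<forall>u\<in>I. \<forall>v\<in>I. {u, v} \<notin> E)"

definition del_edges :: "'a set set \<Rightarrow> 'a set \<Rightarrow> 'a set \<Rightarrow> 'a set set" where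
  "del_edges E V X = {e \<in> E. e \<subseteq> V - X}"

definition connected_graph :: "'a set \<Rightarrow> 'a set set \<Rightarrow> bool" where
  "connected_graph V E \<longleftrightarrow> V \<noteq> {} \<and>
     (\<forall>u\<in>V. \<forall>v\<in>V. (\<lambda>x y. {x, y} \<in> E)\<^sup>*\<^sup>* u v)"

definition k_connected :: "nat \<Rightarrow> 'a set \<Rightarrow> 'a set set \<Rightarrow> bool" where
  "k_connected k V E \<longleftrightarrow> card V > k \<and>
     (\<forall>X. X \<subseteq> V \<and> card X < k \<longrightarrow> connected_graph (V - X) (del_edges E V X))"

definition bicritical :: "'a set \<Rightarrow> 'a set set \<Rightarrow> bool" where
  "bicritical V E \<longleftrightarrow> E \<noteq> {} \<and>
     (\<forall>u\<in>V. \<forall>v\<in>V. u \<noteq> v \<longrightarrow>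
        has_perfect_matching (V - {u, v}) (del_edges E V {u, v}))"

definition brick :: "'a set \<Rightarrow> 'a set set \<Rightarrow> bool" where
  "brick V E \<longleftrightarrow> k_connected 3 V E \<and> bicritical V E"

definition extendable :: "nat \<Rightarrow> 'a set \<Rightarrow> 'a set set \<Rightarrow> bool" where
  "extendable l V E \<longleftrightarrow> connected_graph V E \<and> card V \<ge> 2 * l + 2 \<and>
     has_perfect_matching V E \<and>
     (\<forall>M. matching E M \<and> card M = l \<longrightarrow> (\<exists>P. perfect_matching V E P \<and> M \<subseteq> P))"

end

theory Submission
  imports Defs
begin

text \<open>Fix a perfect matching \<open>M\<close> with \<open>f(G,M) = n - 1\<close>. Any \<open>n - 2\<close> of its edges fail to force it, so
  some other perfect matching agrees with \<open>M\<close> off two given edges; hence every two edges of \<open>M\<close>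
  span an \<open>M\<close>-alternating 4-cycle. This property alone yields the theorem. An independent
  \<open>n\<close>-set contains one end of every \<open>M\<close>-edge, and the 4-cycles then force all edges between it and
  its complement, which is \<open>\<K>^+_{n,n}\<close>. If there is no independent \<open>n\<close>-set, then after deleting
  two vertices \<open>u, v\<close> the partners of \<open>u\<close> and \<open>v\<close> can be rematched along an edge, through one
  further \<open>M\<close>-edge, or through two further \<open>M\<close>-edges joined by an edge, since otherwise both
  partners together with the non-neighbours of the partner of \<open>u\<close> form an independent \<open>n\<close>-set;
  the 4-cycles give 3-connectivity in the same way, and a brick is 1-extendable.\<close>

section \<open>Matchings and partner functions\<close>

lemma simple_graph_edgeE:
  assumes "simple_graph V E" "e \<in> E"
  obtains u v where "u \<in> V" "v \<in> V" "u \<noteq> v" "e = {u, v}"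
  using assms unfolding simple_graph_def by blast

lemma simple_graph_edge_not_singleton:
  assumes "simple_graph V E" shows "{x} \<notin> E"
  using assms by (auto elim!: simple_graph_edgeE simp: doubleton_eq_iff)

lemma simple_graph_edge_subset:
  assumes "simple_graph V E" "e \<in> E"
  shows "e \<subseteq> V"
proof -
  obtain u v where "u \<in> V" "v \<in> V" "e = {u, v}" using simple_graph_edgeE[OF assms] by metis
  then show ?thesis by simp
qed

lemma del_edges_memI:
  assumes "simple_graph V E" "{x, y} \<in> E" "x \<notin> X" "y \<notin> X"
  shows "{x, y} \<in> del_edges E V X"
  using simple_graph_edge_subset[OF assms(1,2)] assms(2-4) unfolding del_edges_def by blast

lemma del_edges_empty:
  assumes "simple_graph V E" shows "del_edges E V {} = E"
  using simple_graph_edge_subset[OF assms] unfolding del_edges_def by blast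

lemma del_edges_reach_sym:
  assumes "(\<lambda>x y. {x, y} \<in> del_edges E V X)\<^sup>*\<^sup>* a b"
  shows "(\<lambda>x y. {x, y} \<in> del_edges E V X)\<^sup>*\<^sup>* b a"
proof -
  have "symp (\<lambda>x y. {x, y} \<in> del_edges E V X)" by (simp add: symp_def insert_commute)
  then show ?thesis using assms sympD symp_rtranclp by metis
qed

lemma matching_disjoint:
  "matching E M \<Longrightarrow> e \<in> M \<Longrightarrow> f \<in> M \<Longrightarrow> e \<noteq> f \<Longrightarrow> e \<inter> f = {}"
  unfolding matching_def by blast

lemma matching_edges_inter:
  assumes "matching E M" "e \<in> M" "f \<in> M" "x \<in> e" "x \<in> f"
  shows "e = f"
  using matching_disjoint[OF assms(1-3)] assms(4,5) by blast

lemma matching_partner_unique: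
  assumes "matching E M" "{x, y} \<in> M" "{x, z} \<in> M"
  shows "y = z"
proof -
  have "{x, y} = {x, z}" using matching_edges_inter[OF assms, of x] by simp
  then show ?thesis by (auto simp: doubleton_eq_iff)
qed

lemma matching_two_edges_distinct:
  assumes G: "simple_graph V E" and M: "matching E M"
    and ab: "{a, b} \<in> M" and cd: "{c, d} \<in> M" and "{a, b} \<noteq> {c, d}"
  shows "a \<noteq> b" "a \<noteq> c" "a \<noteq> d" "b \<noteq> c" "b \<noteq> d" "c \<noteq> d"
proof -
  have "M \<subseteq> E" using M unfolding matching_def by simp
  then have no_loop: "{x} \<notin> M" for x using simple_graph_edge_not_singleton[OF G] by blast
  have "a \<noteq> b" using no_loop[of a] ab by force
  moreover have "c \<noteq> d" using no_loop[of c] cd by force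
  moreover have "{a, b} \<inter> {c, d} = {}" using matching_disjoint[OF M ab cd] \<open>{a, b} \<noteq> {c, d}\<close> .
  ultimately show "a \<noteq> b" "a \<noteq> c" "a \<noteq> d" "b \<noteq> c" "b \<noteq> d" "c \<noteq> d" by auto
qed

lemma matching_disjoint_Union:
  assumes "matching E M" "N \<subseteq> M" "e \<in> M - N"
  shows "e \<inter> \<Union>N = {}"
proof -
  have "e \<inter> f = {}" if "f \<in> N" for f
    using assms that unfolding matching_def by (metis Diff_iff subsetD)
  then show ?thesis by blast
qed

lemma perfect_matching_edge_subset:
  assumes "perfect_matching V E M" "e \<in> M"
  shows "e \<subseteq> V"
  using assms unfolding perfect_matching_def by blast

lemma card_perfect_matching:
  assumes "simple_graph V E" "perfect_matching V E M"
  shows "card V = 2 * card M"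
proof -
  have edge_card: "card e = 2" if "e \<in> M" for e
    using assms that unfolding perfect_matching_def matching_def
    by (auto elim!: simple_graph_edgeE[OF assms(1)])
  have "card V = card (\<Union>M)" using assms(2) unfolding perfect_matching_def by simp
  also have "\<dots> = sum card M"
    using assms(2) edge_card
    by (intro card_Union_disjoint)
      (auto simp: perfect_matching_def matching_def pairwise_def disjnt_def intro: card_ge_0_finite)
  also have "\<dots> = 2 * card M" using edge_card by simp
  finally show ?thesis .
qed

lemma perfect_matching_subset_eq:
  assumes "simple_graph V E" "perfect_matching V E M" "perfect_matching V E M'" "M \<subseteq> M'"
  shows "M' = M"
proof
  show "M' \<subseteq> M"
  proof
    fix e assume e: "e \<in> M'"
    have M': "matching E M'" using assms(3) unfolding perfect_matching_def by simp
    then have "e \<in> E" using e unfolding matching_def by blast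
    then obtain x y where "x \<in> V" "e = {x, y}" using simple_graph_edgeE[OF assms(1)] by metis
    moreover obtain f where "f \<in> M" "x \<in> f"
      using assms(2) \<open>x \<in> V\<close> unfolding perfect_matching_def by blast
    ultimately have "e = f" using matching_edges_inter[OF M' e, of f x] assms(4) by blast
    then show "e \<in> M" using \<open>f \<in> M\<close> by simp
  qed
qed (rule assms(4))

lemma card_Un_image_disjoint:
  assumes "finite D" "inj_on p D" "D \<inter> p ` D = {}"
  shows "card (D \<union> p ` D) = 2 * card D"
  using assms by (simp add: card_Un_disjoint card_image)

locale matching_partner =
  fixes V :: "'a set" and E :: "'a set set" and M :: "'a set set" and p :: "'a \<Rightarrow> 'a"
  assumes simple: "simple_graph V E"
    and perfect: "perfect_matching V E M"
    and partner_edge: "\<And>x. x \<in> V \<Longrightarrow> {x, p x} \<in> M"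
begin

lemma matching: "matching E M"
  using perfect unfolding perfect_matching_def by simp

lemma M_subset_E: "M \<subseteq> E"
  using matching unfolding matching_def by simp

lemma partner_in_E: "x \<in> V \<Longrightarrow> {x, p x} \<in> E"
  using partner_edge M_subset_E by blast

lemma partner_in_V: "x \<in> V \<Longrightarrow> p x \<in> V"
  using partner_edge perfect_matching_edge_subset[OF perfect] by blast

lemma partner_neq: "x \<in> V \<Longrightarrow> p x \<noteq> x"
  using partner_in_E simple_graph_edge_not_singleton[OF simple] by fastforce

lemma partner_unique: "{x, y} \<in> M \<Longrightarrow> x \<in> V \<Longrightarrow> y = p x"
  using matching_partner_unique[OF matching] partner_edge by blast

lemma partner_partner: "x \<in> V \<Longrightarrow> p (p x) = x"
  using partner_unique[of "p x" x] partner_edge partner_in_V by (metis insert_commute)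

lemma partner_eq_iff: "x \<in> V \<Longrightarrow> y \<in> V \<Longrightarrow> p x = y \<longleftrightarrow> x = p y"
  using partner_partner by metis

lemma inj_on_partner: "inj_on p V"
  by (metis inj_onI partner_partner)

lemma partner_outside_pair:
  assumes "x \<in> V" "w \<in> V" "w \<notin> {x, p x}"
  shows "p w \<notin> {x, p x}"
proof -
  have "p w \<noteq> x" using assms partner_eq_iff by blast
  moreover have "p w \<noteq> p x" using assms inj_on_partner unfolding inj_on_def by blast
  ultimately show ?thesis by simp
qed

lemma partner_outside_two_pairs:
  assumes "u \<in> V" "v \<in> V" "w \<in> V - {u, p u, v, p v}"
  shows "p w \<in> V - {u, p u, v, p v}"
  using assms partner_in_V partner_outside_pair[OF assms(1)] partner_outside_pair[OF assms(2)] by auto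

lemma partner_pairs_distinct:
  assumes "u \<in> V" "v \<in> V" "u \<noteq> v" "v \<noteq> p u"
  shows "p u \<noteq> u" "p v \<noteq> v" "p u \<noteq> v" "u \<noteq> p v" "p u \<noteq> p v"
  using assms partner_neq partner_eq_iff inj_on_partner unfolding inj_on_def by metis+

lemma card_pair_transversal:
  assumes "W \<subseteq> V" "\<And>w. w \<in> W \<Longrightarrow> p w \<in> W" "D \<subseteq> W"
    and transversal: "\<And>w. w \<in> W \<Longrightarrow> w \<in> D \<longleftrightarrow> p w \<notin> D"
  shows "card W = 2 * card D"
proof -
  have "W = D \<union> p ` D"
  proof
    show "W \<subseteq> D \<union> p ` D"
    proof
      fix w assume "w \<in> W"
      then show "w \<in> D \<union> p ` D"
        using transversal[of w] assms(1) partner_partner[of w] by (metis UnI1 UnI2 image_eqI subsetD)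
    qed
    show "D \<union> p ` D \<subseteq> W" using assms(2,3) by blast
  qed
  moreover have "D \<inter> p ` D = {}" using transversal assms(3) by blast
  moreover have "finite D" using assms(1,3) simple finite_subset unfolding simple_graph_def by metis
  ultimately show ?thesis
    using card_Un_image_disjoint inj_on_subset[OF inj_on_partner] assms(1,3) by (metis subset_trans)
qed

end

lemma perfect_matching_partner:
  assumes "simple_graph V E" "perfect_matching V E M"
  obtains p where "matching_partner V E M p"
proof -
  have "\<exists>y. {x, y} \<in> M" if x: "x \<in> V" for x
  proof -
    obtain e where "e \<in> M" "x \<in> e"
      using assms(2) x unfolding perfect_matching_def by blast
    moreover have "e \<in> E" using assms(2) \<open>e \<in> M\<close> unfolding perfect_matching_def matching_def by blast
    ultimately obtain u v where "e = {u, v}" "x \<in> {u, v}" "e \<in> M"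
      using assms(1) by (auto elim!: simple_graph_edgeE)
    then show ?thesis by (metis insert_commute insertE singletonD)
  qed
  then obtain p where "\<And>x. x \<in> V \<Longrightarrow> {x, p x} \<in> M" by metis
  then have "matching_partner V E M p" using assms by (intro matching_partner.intro)
  then show thesis by (rule that)
qed

section \<open>Extremal forcing number and alternating squares\<close>

lemma rematching_stays_in_block:
  assumes "perfect_matching V E M" "perfect_matching V E M'" "N \<subseteq> M" "M - N \<subseteq> M'"
    and "x \<in> \<Union>N" "{x, y} \<in> M'"
  shows "y \<in> \<Union>N"
proof (rule ccontr)
  assume y: "y \<notin> \<Union>N"
  have "y \<in> V" using perfect_matching_edge_subset[OF assms(2,6)] by simp
  then obtain f where f: "f \<in> M" "y \<in> f" using assms(1) unfolding perfect_matching_def by blast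
  then have "f \<in> M'" using assms(4) y by blast
  then have "f = {x, y}"
    using matching_edges_inter[of E M' f "{x, y}" y] assms(2,6) f(2)
    unfolding perfect_matching_def by simp
  moreover obtain g where "g \<in> N" "x \<in> g" using assms(5) by blast
  ultimately have "f = g"
    using matching_edges_inter[of E M f g x] assms(1,3) f(1) unfolding perfect_matching_def by blast
  then show False using \<open>g \<in> N\<close> f(2) y by blast
qed

definition alternating_squares :: "'a set set \<Rightarrow> 'a set set \<Rightarrow> bool" where
  "alternating_squares E M \<longleftrightarrow> (\<forall>a b c d. {a, b} \<in> M \<longrightarrow> {c, d} \<in> M \<longrightarrow> {a, b} \<noteq> {c, d} \<longrightarrow>
     ({a, c} \<in> E \<and> {b, d} \<in> E) \<or> ({a, d} \<in> E \<and> {b, c} \<in> E))"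

lemma rematching_two_edges_square:
  assumes G: "simple_graph V E" and M: "perfect_matching V E M" and M': "perfect_matching V E M'"
    and "M' \<noteq> M" and kept: "M - {{a, b}, {c, d}} \<subseteq> M'"
    and ab: "{a, b} \<in> M" and cd: "{c, d} \<in> M" and "{a, b} \<noteq> {c, d}"
  shows "({a, c} \<in> E \<and> {b, d} \<in> E) \<or> ({a, d} \<in> E \<and> {b, c} \<in> E)"
proof -
  obtain q where "matching_partner V E M' q" using perfect_matching_partner[OF G M'] .
  then interpret M': matching_partner V E M' q .
  have "matching E M" using M unfolding perfect_matching_def by simp
  note distinct = matching_two_edges_distinct[OF G this ab cd \<open>{a, b} \<noteq> {c, d}\<close>]
  have V: "a \<in> V" "b \<in> V" "c \<in> V" "d \<in> V"
    using perfect_matching_edge_subset[OF M ab] perfect_matching_edge_subset[OF M cd] by auto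
  have block: "q x \<in> {a, b, c, d}" if "x \<in> {a, b, c, d}" for x
    using rematching_stays_in_block[OF M M' _ kept, of x "q x"] ab cd that V M'.partner_edge by auto
  have partner: "{x, q x} \<in> M'" "q x \<noteq> x" "q (q x) = x" if "x \<in> {a, b, c, d}" for x
    using that V M'.partner_edge M'.partner_neq M'.partner_partner by auto
  have "q a \<in> {b, c, d}" using block[of a] partner(2)[of a] by auto
  then have "({a, c} \<in> M' \<and> {b, d} \<in> M') \<or> ({a, d} \<in> M' \<and> {b, c} \<in> M') \<or> ({a, b} \<in> M' \<and> {c, d} \<in> M')"
  proof (elim insertE emptyE)
    assume "q a = b"
    then have "q c = d" using block[of c] partner[of c] partner[of a] distinct by auto
    then show ?thesis using partner(1)[of a] partner(1)[of c] \<open>q a = b\<close> by auto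
  next
    assume "q a = c"
    then have "q b = d" using block[of b] partner[of b] partner[of a] distinct by auto
    then show ?thesis using partner(1)[of a] partner(1)[of b] \<open>q a = c\<close> by auto
  next
    assume "q a = d"
    then have "q b = c" using block[of b] partner[of b] partner[of a] distinct by auto
    then show ?thesis using partner(1)[of a] partner(1)[of b] \<open>q a = d\<close> by auto
  qed
  moreover have "\<not> ({a, b} \<in> M' \<and> {c, d} \<in> M')"
  proof
    assume "{a, b} \<in> M' \<and> {c, d} \<in> M'"
    then have "M \<subseteq> M'" using kept by blast
    then show False using perfect_matching_subset_eq[OF G M M'] \<open>M' \<noteq> M\<close> by simp
  qed
  ultimately show ?thesis using M'.M_subset_E by blast
qed

lemma finite_perfect_matchings:
  assumes "finite V" shows "finite {M. perfect_matching V E M}"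
proof (rule finite_subset)
  show "{M. perfect_matching V E M} \<subseteq> Pow (Pow V)" unfolding perfect_matching_def by auto
qed (use assms in simp)

lemma forcing_number_le:
  assumes "finite M" "forcing_set V E M S"
  shows "forcing_number V E M \<le> card S"
proof -
  have "{card S |S. forcing_set V E M S} \<subseteq> card ` Pow M"
    unfolding forcing_set_def by auto
  then have "finite {card S |S. forcing_set V E M S}"
    using assms(1) finite_subset by blast
  then show ?thesis unfolding forcing_number_def using assms(2) by (intro Min_le) auto
qed

lemma max_forcing_number_attained:
  assumes "finite V" "has_perfect_matching V E"
  obtains M where "perfect_matching V E M" "forcing_number V E M = max_forcing_number V E"
proof -
  have image_form: "{forcing_number V E M | M. perfect_matching V E M}
      = forcing_number V E ` {M. perfect_matching V E M}" by blast
  have "max_forcing_number V E \<in> forcing_number V E ` {M. perfect_matching V E M}"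
    unfolding max_forcing_number_def image_form
  proof (rule Max_in)
    show "finite (forcing_number V E ` {M. perfect_matching V E M})"
      using finite_perfect_matchings[OF assms(1)] by (rule finite_imageI)
    show "forcing_number V E ` {M. perfect_matching V E M} \<noteq> {}"
      using assms(2) unfolding has_perfect_matching_def by auto
  qed
  then show thesis using that by auto
qed

lemma extremal_forcing_alternating_squares:
  assumes G: "in_G2n n V E" and F: "max_forcing_number V E = n - 1"
  obtains M where "perfect_matching V E M" "alternating_squares E M"
proof -
  have simple: "simple_graph V E" and finV: "finite V"
    using G unfolding in_G2n_def simple_graph_def by auto
  obtain M where M: "perfect_matching V E M" and fM: "forcing_number V E M = n - 1"
    using max_forcing_number_attained[OF finV] G F unfolding in_G2n_def by metis
  have cardM: "card M = n" using card_perfect_matching[OF simple M] G unfolding in_G2n_def by simp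
  have finM: "finite M" using M finV unfolding perfect_matching_def by (metis finite_UnionD)
  have "alternating_squares E M"
    unfolding alternating_squares_def
  proof (intro allI impI)
    fix a b c d assume ab: "{a, b} \<in> M" and cd: "{c, d} \<in> M" and ne: "{a, b} \<noteq> {c, d}"
    let ?S = "M - {{a, b}, {c, d}}"
    have "card ?S = n - 2" using ab cd ne finM cardM by (simp add: card_Diff_subset)
    moreover have "2 \<le> n"
      using card_mono[OF finM, of "{{a, b}, {c, d}}"] ab cd ne cardM by simp
    ultimately have "\<not> forcing_set V E M ?S" using forcing_number_le[OF finM] fM by fastforce
    then obtain M' where "perfect_matching V E M'" "?S \<subseteq> M'" "M' \<noteq> M"
      unfolding forcing_set_def by blast
    then show "({a, c} \<in> E \<and> {b, d} \<in> E) \<or> ({a, d} \<in> E \<and> {b, c} \<in> E)"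
      using rematching_two_edges_square[OF simple M] ab cd ne by blast
  qed
  then show thesis using that M by blast
qed

section \<open>Independent \<open>n\<close>-sets and \<open>\<K>^+_{n,n}\<close>\<close>

lemma Kplus_imp_independent_set:
  assumes "in_Kplus n V E"
  shows "\<exists>I. independent_set V E I \<and> card I = n"
proof -
  obtain A B where AB: "A \<inter> B = {}" "A \<union> B = V" "card B = n"
    and edges: "\<forall>e\<in>E. e \<subseteq> A \<or> (\<exists>a\<in>A. \<exists>b\<in>B. e = {a, b})"
    using assms unfolding in_Kplus_def by (elim exE conjE) simp
  have "{x, y} \<notin> E" if xy: "x \<in> B" "y \<in> B" for x y
  proof
    assume "{x, y} \<in> E"
    then consider "{x, y} \<subseteq> A" | a b where "a \<in> A" "b \<in> B" "{x, y} = {a, b}"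
      using edges by blast
    then show False
    proof cases
      case 1 then show False using xy AB(1) by blast
    next
      case 2 then have "a \<in> B" using xy by (auto simp: doubleton_eq_iff)
      then show False using \<open>a \<in> A\<close> AB(1) by blast
    qed
  qed
  then have "independent_set V E B" using AB(2) unfolding independent_set_def by blast
  then show ?thesis using AB(3) by blast
qed

locale square_matching = matching_partner +
  fixes n :: nat
  assumes card_V: "card V = 2 * n"
    and squares: "alternating_squares E M"
begin

lemma finite_V: "finite V"
  using simple unfolding simple_graph_def by simp

lemma alternating_square:
  assumes "x \<in> V" "y \<in> V" "y \<noteq> x" "y \<noteq> p x"
  shows "({x, y} \<in> E \<and> {p x, p y} \<in> E) \<or> ({x, p y} \<in> E \<and> {p x, y} \<in> E)"
proof -
  have "{x, p x} \<noteq> {y, p y}" using assms by (auto simp: doubleton_eq_iff)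
  then show ?thesis using squares partner_edge assms(1,2) unfolding alternating_squares_def by blast
qed

lemma adjacent_to_pair:
  assumes "x \<in> V" "y \<in> V" "y \<noteq> x" "y \<noteq> p x"
  shows "{x, y} \<in> E \<or> {x, p y} \<in> E"
  using alternating_square[OF assms] by blast

lemma independent_set_imp_Kplus:
  assumes I: "independent_set V E I" "card I = n"
  shows "in_Kplus n V E"
proof -
  have IV: "I \<subseteq> V" and indep: "\<And>x y. x \<in> I \<Longrightarrow> y \<in> I \<Longrightarrow> {x, y} \<notin> E"
    using I unfolding independent_set_def by auto
  have finI: "finite I" using IV finite_V finite_subset by blast
  have "I \<inter> p ` I = {}" using indep partner_in_E IV by blast
  then have "card (I \<union> p ` I) = card V"
    using card_Un_image_disjoint[OF finI inj_on_subset[OF inj_on_partner IV]] I(2) card_V by simp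
  moreover have "I \<union> p ` I \<subseteq> V" using IV by (auto intro: partner_in_V)
  ultimately have cover: "I \<union> p ` I = V" using card_subset_eq[OF finite_V] by blast
  have partner_in_I: "p x \<in> I" if x: "x \<in> V - I" for x
  proof -
    obtain y where "y \<in> I" "x = p y" using x cover by blast
    then show ?thesis using IV partner_partner by auto
  qed
  have complete: "{a, b} \<in> E" if a: "a \<in> V - I" and b: "b \<in> I" for a b
  proof (cases "b = p a")
    case True then show ?thesis using partner_in_E a by simp
  next
    case False
    then show ?thesis
      using alternating_square[of a b] indep[OF partner_in_I[OF a] b] a b IV by blast
  qed
  have sides: "e \<subseteq> V - I \<or> (\<exists>a\<in>V - I. \<exists>b\<in>I. e = {a, b})" if "e \<in> E" for e
  proof -
    obtain x y where xy: "x \<in> V" "y \<in> V" "e = {x, y}"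
      using simple_graph_edgeE[OF simple \<open>e \<in> E\<close>] by metis
    then have "x \<notin> I \<or> y \<notin> I" using indep \<open>e \<in> E\<close> by blast
    then show ?thesis using xy by (auto simp: insert_commute)
  qed
  show ?thesis
    unfolding in_Kplus_def
    using complete sides IV I(2) card_V finI
    by (intro exI[of _ "V - I"] exI[of _ I]) (auto simp: card_Diff_subset)
qed

end

section \<open>Rerouting perfect matchings\<close>

lemma matching_Un:
  assumes A: "matching E A" and B: "matching E B" and cross: "\<And>e f. e \<in> A \<Longrightarrow> f \<in> B \<Longrightarrow> e \<inter> f = {}"
  shows "matching E (A \<union> B)"
  unfolding matching_def
proof (intro conjI ballI impI)
  show "A \<union> B \<subseteq> E" using A B unfolding matching_def by blast
  fix e f assume e: "e \<in> A \<union> B" and f: "f \<in> A \<union> B" and "e \<noteq> f"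
  show "e \<inter> f = {}"
  proof (cases "e \<in> A"; cases "f \<in> A")
    assume "e \<in> A" "f \<in> A"
    then show ?thesis using matching_disjoint[OF A] \<open>e \<noteq> f\<close> by simp
  next
    assume "e \<in> A" "f \<notin> A"
    then show ?thesis using cross f by simp
  next
    assume "e \<notin> A" "f \<in> A"
    then show ?thesis using cross[of f e] e by (simp add: Int_commute)
  next
    assume "e \<notin> A" "f \<notin> A"
    then show ?thesis using matching_disjoint[OF B] e f \<open>e \<noteq> f\<close> by simp
  qed
qed

lemma perfect_matching_reroute:
  assumes M: "perfect_matching V E M" and N: "N \<subseteq> M" and X: "X \<subseteq> \<Union>N"
    and N': "matching E N'" "\<Union>N' = \<Union>N - X"
  shows "has_perfect_matching (V - X) (del_edges E V X)"
proof -
  have Mm: "matching E M" and UM: "\<Union>M = V" using M unfolding perfect_matching_def by auto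
  have outside: "e \<inter> \<Union>N = {}" if "e \<in> M - N" for e using matching_disjoint_Union[OF Mm N that] .
  have NV: "\<Union>N \<subseteq> V" using N UM by blast
  have "matching E (M - N)" using Mm unfolding matching_def by blast
  then have matching: "matching E ((M - N) \<union> N')"
    using N' outside by (intro matching_Un) blast+
  have edges: "(M - N) \<union> N' \<subseteq> del_edges E V X"
  proof
    fix e assume e: "e \<in> (M - N) \<union> N'"
    have "e \<in> E" using e matching unfolding matching_def by blast
    moreover have "e \<subseteq> V - X"
    proof (cases "e \<in> N'")
      case True then show ?thesis using N'(2) NV by blast
    next
      case False then show ?thesis using e outside[of e] X UM by blast
    qed
    ultimately show "e \<in> del_edges E V X" unfolding del_edges_def by blast
  qed
  have "\<Union>(M - N) = V - \<Union>N" using outside UM by blast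
  then have "\<Union>((M - N) \<union> N') = V - X" using N'(2) X NV by blast
  then show ?thesis
    using matching edges unfolding has_perfect_matching_def perfect_matching_def matching_def by blast
qed

context matching_partner
begin

lemma perfect_matching_after_deleting_partners:
  assumes "u \<in> V"
  shows "has_perfect_matching (V - {u, p u}) (del_edges E V {u, p u})"
  by (rule perfect_matching_reroute[OF perfect, of "{{u, p u}}" _ "{}"])
    (use assms partner_edge in \<open>auto simp: matching_def\<close>)

lemma reroute_by_edge:
  assumes "u \<in> V" "v \<in> V" "u \<noteq> v" "v \<noteq> p u" "{p u, p v} \<in> E"
  shows "has_perfect_matching (V - {u, v}) (del_edges E V {u, v})"
proof (rule perfect_matching_reroute[OF perfect, of "{{u, p u}, {v, p v}}" _ "{{p u, p v}}"])
  show "{{u, p u}, {v, p v}} \<subseteq> M" using assms partner_edge by auto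
  show "matching E {{p u, p v}}" using assms(5) unfolding matching_def by auto
  show "\<Union>{{p u, p v}} = \<Union>{{u, p u}, {v, p v}} - {u, v}"
    using partner_pairs_distinct[OF assms(1-4)] by auto
qed auto

lemma reroute_by_square:
  assumes "u \<in> V" "v \<in> V" "u \<noteq> v" "v \<noteq> p u" and w: "w \<in> V - {u, p u, v, p v}"
    and "{p u, w} \<in> E" "{p v, p w} \<in> E"
  shows "has_perfect_matching (V - {u, v}) (del_edges E V {u, v})"
proof (rule perfect_matching_reroute[OF perfect, of "{{u, p u}, {v, p v}, {w, p w}}" _
      "{{p u, w}, {p v, p w}}"])
  have "p w \<in> V - {u, p u, v, p v}" "p w \<noteq> w"
    using partner_outside_two_pairs[OF assms(1,2) w] partner_neq w by auto
  note distinct = this partner_pairs_distinct[OF assms(1-4)] w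
  show "{{u, p u}, {v, p v}, {w, p w}} \<subseteq> M" using assms partner_edge by auto
  show "matching E {{p u, w}, {p v, p w}}" using assms(6,7) distinct unfolding matching_def by auto
  show "\<Union>{{p u, w}, {p v, p w}} = \<Union>{{u, p u}, {v, p v}, {w, p w}} - {u, v}"
    using distinct by auto
qed auto

lemma reroute_by_hexagon:
  assumes "u \<in> V" "v \<in> V" "u \<noteq> v" "v \<noteq> p u"
    and w: "w \<in> V - {u, p u, v, p v}" and z: "z \<in> V - {u, p u, v, p v}" "z \<notin> {w, p w}"
    and "{p u, p w} \<in> E" "{p v, p z} \<in> E" "{w, z} \<in> E"
  shows "has_perfect_matching (V - {u, v}) (del_edges E V {u, v})"
proof (rule perfect_matching_reroute[OF perfect, of "{{u, p u}, {v, p v}, {w, p w}, {z, p z}}" _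
      "{{p u, p w}, {p v, p z}, {w, z}}"])
  have "p w \<in> V - {u, p u, v, p v}" "p z \<in> V - {u, p u, v, p v}" "p w \<noteq> w" "p z \<noteq> z"
    "p z \<notin> {w, p w}"
    using partner_outside_two_pairs[OF assms(1,2)] partner_outside_pair[of w z] partner_neq w z
    by auto
  note distinct = this partner_pairs_distinct[OF assms(1-4)] w z
  show "{{u, p u}, {v, p v}, {w, p w}, {z, p z}} \<subseteq> M" using assms partner_edge by auto
  show "matching E {{p u, p w}, {p v, p z}, {w, z}}"
    using assms(8-10) distinct unfolding matching_def by auto
  show "\<Union>{{p u, p w}, {p v, p z}, {w, z}} = \<Union>{{u, p u}, {v, p v}, {w, p w}, {z, p z}} - {u, v}"
    using distinct by auto
qed auto

end

section \<open>Bicriticality and 3-connectivity\<close>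

context square_matching
begin

lemma two_le_n:
  assumes no_indep: "\<nexists>I. independent_set V E I \<and> card I = n"
  shows "2 \<le> n"
proof (rule ccontr)
  assume "\<not> 2 \<le> n"
  then consider "n = 0" | "n = 1" by linarith
  then show False
  proof cases
    case 1
    have "independent_set V E {}" unfolding independent_set_def by simp
    moreover have "card {} = n" using 1 by simp
    ultimately show False using no_indep by blast
  next
    case 2
    then have "V \<noteq> {}" using card_V by auto
    then obtain x where "x \<in> V" by blast
    then have "independent_set V E {x}"
      using simple_graph_edge_not_singleton[OF simple] unfolding independent_set_def by simp
    moreover have "card {x} = n" using 2 by simp
    ultimately show False using no_indep by blast
  qed
qed

lemma partners_common_neighbours:
  assumes "u \<in> V" "v \<in> V" "u \<noteq> v" "v \<noteq> p u"
    and no_square: "\<forall>w \<in> V - {u, p u, v, p v}. {p u, w} \<in> E \<longrightarrow> {p v, p w} \<notin> E"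
    and w: "w \<in> V - {u, p u, v, p v}"
  shows "{p u, w} \<in> E \<longleftrightarrow> {p v, w} \<in> E" "{p u, w} \<in> E \<longleftrightarrow> {p u, p w} \<notin> E"
proof -
  have pw: "p w \<in> V - {u, p u, v, p v}"
    using partner_outside_two_pairs[OF assms(1,2) w] .
  have "{p u, w} \<in> E \<or> {p u, p w} \<in> E" "{p v, w} \<in> E \<or> {p v, p w} \<in> E"
    using adjacent_to_pair[of "p u" w] adjacent_to_pair[of "p v" w] w assms(1,2)
      partner_in_V partner_partner by auto
  moreover have "{p u, p w} \<in> E \<Longrightarrow> {p v, w} \<notin> E"
    using no_square pw w partner_partner by auto
  ultimately show "{p u, w} \<in> E \<longleftrightarrow> {p v, w} \<in> E" "{p u, w} \<in> E \<longleftrightarrow> {p u, p w} \<notin> E"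
    using no_square w by blast+
qed

lemma non_neighbours_independent:
  assumes "u \<in> V" "v \<in> V" "u \<noteq> v" "v \<noteq> p u" and no_edge: "{p u, p v} \<notin> E"
    and no_square: "\<forall>w \<in> V - {u, p u, v, p v}. {p u, w} \<in> E \<longrightarrow> {p v, p w} \<notin> E"
    and D: "D = {w \<in> V - {u, p u, v, p v}. {p u, w} \<notin> E}"
    and no_hexagon: "\<And>w z. w \<in> D \<Longrightarrow> z \<in> D \<Longrightarrow> {w, z} \<notin> E"
  shows "independent_set V E (insert (p u) (insert (p v) D))"
    and "card (insert (p u) (insert (p v) D)) = n"
proof -
  let ?W = "V - {u, p u, v, p v}"
  note common = partners_common_neighbours[OF assms(1-4) no_square]
  note distinct = partner_pairs_distinct[OF assms(1-4)]
  have pu: "p u \<in> V" "p u \<notin> D" and pv: "p v \<in> V" "p v \<notin> D"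
    using assms(1,2) partner_in_V D by auto
  have "card ?W = 2 * card D"
  proof (rule card_pair_transversal)
    show "p w \<in> ?W" if "w \<in> ?W" for w using partner_outside_two_pairs[OF assms(1,2) that] .
    then show "w \<in> D \<longleftrightarrow> p w \<notin> D" if w: "w \<in> ?W" for w
      using w common(2)[OF w] D by blast
  qed (use D in auto)
  moreover have "card ?W = 2 * n - 4"
    using card_V distinct assms(1-4) pu pv by (simp add: card_Diff_subset finite_V)
  ultimately have "card D = n - 2" by simp
  moreover have "n \<ge> 2"
  proof -
    have "card {u, p u, v, p v} \<le> card V"
      using assms(1,2) pu pv by (intro card_mono[OF finite_V]) auto
    then show ?thesis using distinct card_V assms(3,4) by simp
  qed
  moreover have "finite D" using D finite_V by simp
  ultimately show "card (insert (p u) (insert (p v) D)) = n"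
    using pu(2) pv(2) distinct(5) by simp
  have DV: "D \<subseteq> V" using D by blast
  have "{p u, w} \<notin> E" "{p v, w} \<notin> E" if "w \<in> D" for w
    using that common(1) D by auto
  then have "{x, y} \<notin> E" if "x \<in> insert (p u) (insert (p v) D)" "y \<in> insert (p u) (insert (p v) D)" for x y
    using that no_edge no_hexagon simple_graph_edge_not_singleton[OF simple]
    by (auto simp: insert_commute)
  then show "independent_set V E (insert (p u) (insert (p v) D))"
    unfolding independent_set_def using DV pu pv by blast
qed

lemma perfect_matching_after_deleting_two:
  assumes "u \<in> V" "v \<in> V" "u \<noteq> v" and no_indep: "\<nexists>I. independent_set V E I \<and> card I = n"
  shows "has_perfect_matching (V - {u, v}) (del_edges E V {u, v})"
proof (cases "v = p u")
  case True
  then show ?thesis using perfect_matching_after_deleting_partners[OF assms(1)] by simp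
next
  case False
  let ?W = "V - {u, p u, v, p v}"
  show ?thesis
  proof (rule ccontr)
    assume no_pm: "\<not> ?thesis"
    have no_edge: "{p u, p v} \<notin> E" using reroute_by_edge assms False no_pm by blast
    have no_square: "\<forall>w \<in> ?W. {p u, w} \<in> E \<longrightarrow> {p v, p w} \<notin> E"
      using reroute_by_square[OF assms(1-3) False] no_pm by blast
    note common = partners_common_neighbours[OF assms(1-3) False no_square]
    define D where "D = {w \<in> ?W. {p u, w} \<notin> E}"
    have no_hexagon: "{w, z} \<notin> E" if "w \<in> D" "z \<in> D" for w z
    proof
      assume wz: "{w, z} \<in> E"
      have W: "w \<in> ?W" "z \<in> ?W" using that D_def by auto
      have pw: "p w \<in> ?W" "p z \<in> ?W" using partner_outside_two_pairs[OF assms(1,2)] W by auto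
      have "{p u, p w} \<in> E" "{p u, p z} \<in> E" using common(2) W that D_def by auto
      moreover have "{p v, p z} \<in> E" using common(1)[OF pw(2)] calculation(2) by blast
      moreover have "z \<notin> {w, p w}"
        using wz simple_graph_edge_not_singleton[OF simple] calculation(1) that D_def by auto
      ultimately show False
        using reroute_by_hexagon[OF assms(1-3) False W(1) W(2)] wz no_pm by blast
    qed
    show False
      using non_neighbours_independent[OF assms(1-3) False no_edge no_square D_def no_hexagon]
        no_indep by blast
  qed
qed

lemma no_independent_imp_bicritical:
  assumes "\<nexists>I. independent_set V E I \<and> card I = n"
  shows "bicritical V E"
  unfolding bicritical_def
proof (intro conjI ballI impI)
  obtain x where "x \<in> V" using two_le_n[OF assms] card_V by fastforce
  then show "E \<noteq> {}" using partner_in_E by blast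
qed (use perfect_matching_after_deleting_two assms in blast)

lemma reach_via_pair:
  assumes a: "a \<in> V - X" and w: "w \<in> V - X" "p w \<notin> X" "w \<noteq> a" "w \<noteq> p a"
  shows "(\<lambda>x y. {x, y} \<in> del_edges E V X)\<^sup>*\<^sup>* a w"
proof (cases "{a, w} \<in> E")
  case True
  then show ?thesis using del_edges_memI[OF simple True] a w by blast
next
  case False
  then have "{a, p w} \<in> E" using adjacent_to_pair[of a w] a w by blast
  then have "{a, p w} \<in> del_edges E V X" "{p w, w} \<in> del_edges E V X"
    using del_edges_memI[OF simple] partner_in_E[of w] a w by (auto simp: insert_commute)
  then show ?thesis by (meson converse_rtranclp_into_rtranclp r_into_rtranclp)
qed

lemma adjacent_in_four_vertex_graph:
  assumes no_indep: "\<nexists>I. independent_set V E I \<and> card I = n"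
    and V: "V \<subseteq> {a, p a, b, p b}" and "a \<in> V" "b \<in> V" "a \<noteq> b"
  shows "{a, b} \<in> E"
proof (rule ccontr)
  assume "{a, b} \<notin> E"
  then have "independent_set V E {a, b}"
    using assms(3,4) simple_graph_edge_not_singleton[OF simple]
    unfolding independent_set_def by (auto simp: insert_commute)
  moreover have "card {a, b} = n"
  proof -
    have "card V \<le> card {a, p a, b, p b}" using card_mono[OF _ V] by simp
    also have "\<dots> \<le> 4" using card_length[of "[a, p a, b, p b]"] by simp
    finally show ?thesis using two_le_n[OF no_indep] card_V \<open>a \<noteq> b\<close> by simp
  qed
  ultimately show False using no_indep by blast
qed

lemma joined_around_deleted_partners:
  assumes no_indep: "\<nexists>I. independent_set V E I \<and> card I = n"
    and X: "X \<subseteq> V" "card X < 3" and a: "a \<in> V - X" and b: "b \<in> V - X"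
    and "a \<noteq> b" "p a \<in> X" "p b \<in> X"
  shows "(\<lambda>x y. {x, y} \<in> del_edges E V X)\<^sup>*\<^sup>* a b"
proof (cases "V \<subseteq> {a, p a, b, p b}")
  case True
  then show ?thesis
    using adjacent_in_four_vertex_graph[OF no_indep True] del_edges_memI[OF simple] a b \<open>a \<noteq> b\<close>
    by blast
next
  case False
  then obtain w where w: "w \<in> V" "w \<notin> {a, p a}" "w \<notin> {b, p b}" by blast
  then have pw: "p w \<notin> {a, p a}" "p w \<notin> {b, p b}" using partner_outside_pair a b by auto
  have "p a \<noteq> p b" using \<open>a \<noteq> b\<close> a b inj_on_partner unfolding inj_on_def by blast
  have outside: "x \<notin> X" if x: "x \<notin> {p a, p b}" for x
  proof
    assume "x \<in> X"
    then have "card {p a, p b, x} \<le> card X"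
      using assms(7,8) X(1) finite_V finite_subset by (intro card_mono) auto
    moreover have "card {p a, p b, x} = 3" using x \<open>p a \<noteq> p b\<close> by (auto simp: card_insert_if)
    ultimately show False using X(2) by simp
  qed
  have w_kept: "w \<in> V - X" "p w \<notin> X" using outside w pw by auto
  have "(\<lambda>x y. {x, y} \<in> del_edges E V X)\<^sup>*\<^sup>* a w" using reach_via_pair[OF a w_kept] w(2) by simp
  moreover have "(\<lambda>x y. {x, y} \<in> del_edges E V X)\<^sup>*\<^sup>* w b"
    using del_edges_reach_sym reach_via_pair[OF b w_kept] w(3) by simp
  ultimately show ?thesis by (rule rtranclp_trans)
qed

lemma joined_after_deleting_two:
  assumes no_indep: "\<nexists>I. independent_set V E I \<and> card I = n"
    and X: "X \<subseteq> V" "card X < 3" and a: "a \<in> V - X" and b: "b \<in> V - X"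
  shows "(\<lambda>x y. {x, y} \<in> del_edges E V X)\<^sup>*\<^sup>* a b"
proof -
  consider "a = b" | "b = p a" | "a \<noteq> b" "b \<noteq> p a" "p b \<notin> X" | "a \<noteq> b" "b \<noteq> p a" "p a \<notin> X"
    | "a \<noteq> b" "p a \<in> X" "p b \<in> X" by blast
  then show ?thesis
  proof cases
    case 2 then show ?thesis using del_edges_memI[OF simple partner_in_E] a b by blast
  next
    case 3 then show ?thesis using reach_via_pair[OF a b] by blast
  next
    case 4
    then have "a \<noteq> p b" using a b partner_eq_iff by blast
    then have "(\<lambda>x y. {x, y} \<in> del_edges E V X)\<^sup>*\<^sup>* b a" using reach_via_pair[OF b a] 4 by blast
    then show ?thesis by (rule del_edges_reach_sym)
  next
    case 5 then show ?thesis using joined_around_deleted_partners[OF no_indep X a b] by blast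
  qed simp
qed

lemma no_independent_imp_3_connected:
  assumes no_indep: "\<nexists>I. independent_set V E I \<and> card I = n"
  shows "k_connected 3 V E"
  unfolding k_connected_def connected_graph_def
proof (intro conjI allI impI ballI)
  show "3 < card V" using two_le_n[OF no_indep] card_V by simp
  fix X assume X: "X \<subseteq> V \<and> card X < 3"
  show "V - X \<noteq> {}"
  proof
    assume "V - X = {}"
    then have "card V \<le> card X" using X finite_V finite_subset by (metis Diff_eq_empty_iff card_mono)
    then show False using X \<open>3 < card V\<close> by simp
  qed
  show "(\<lambda>x y. {x, y} \<in> del_edges E V X)\<^sup>*\<^sup>* a b" if "a \<in> V - X" "b \<in> V - X" for a b
    using joined_after_deleting_two[OF no_indep _ _ that] X by blast
qed

lemma no_independent_imp_brick:
  assumes "\<nexists>I. independent_set V E I \<and> card I = n"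
  shows "brick V E"
  unfolding brick_def
  using no_independent_imp_3_connected[OF assms] no_independent_imp_bicritical[OF assms] by blast

end

section \<open>Bricks are 1-extendable\<close>

lemma bicritical_edge_in_perfect_matching:
  assumes G: "simple_graph V E" and "bicritical V E" and e: "e \<in> E"
  shows "\<exists>P. perfect_matching V E P \<and> e \<in> P"
proof -
  obtain x y where xy: "x \<in> V" "y \<in> V" "x \<noteq> y" "e = {x, y}" using simple_graph_edgeE[OF G e] by metis
  then obtain P where P: "perfect_matching (V - e) (del_edges E V e) P"
    using assms(2) unfolding bicritical_def has_perfect_matching_def by metis
  have P_edges: "f \<in> E" "f \<subseteq> V - e" if "f \<in> P" for f
    using P that unfolding perfect_matching_def matching_def del_edges_def by auto
  have "perfect_matching V E (insert e P)"
    unfolding perfect_matching_def matching_def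
  proof (intro conjI ballI impI)
    show "insert e P \<subseteq> E" using e P_edges by blast
    show "f \<inter> g = {}" if "f \<in> insert e P" "g \<in> insert e P" "f \<noteq> g" for f g
      using that P_edges P unfolding perfect_matching_def matching_def by blast
    show "\<Union>(insert e P) = V" using P xy unfolding perfect_matching_def by auto
  qed
  then show ?thesis by blast
qed

lemma brick_imp_extendable_1:
  assumes G: "simple_graph V E" and "brick V E"
  shows "extendable 1 V E"
proof -
  have conn: "k_connected 3 V E" and bic: "bicritical V E" using assms(2) unfolding brick_def by auto
  have "connected_graph (V - {}) (del_edges E V {})"
    using conn unfolding k_connected_def by (elim conjE allE[of _ "{}"]) simp
  then have "connected_graph V E" using del_edges_empty[OF G] by simp
  moreover have "2 * 1 + 2 \<le> card V" using conn unfolding k_connected_def by simp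
  moreover have "has_perfect_matching V E"
    using bic bicritical_edge_in_perfect_matching[OF G bic] unfolding bicritical_def has_perfect_matching_def
    by blast
  moreover have "\<exists>P. perfect_matching V E P \<and> M \<subseteq> P" if M: "matching E M \<and> card M = 1" for M
  proof -
    obtain e where "M = {e}" using M card_1_singleton_iff[of M] by auto
    then show ?thesis
      using M bicritical_edge_in_perfect_matching[OF G bic] unfolding matching_def by auto
  qed
  ultimately show ?thesis unfolding extendable_def by blast
qed

theorem lemma2p5:
  fixes V :: "'a set" and E :: "'a set set" and n :: nat
  assumes "in_G2n n V E"
    and "max_forcing_number V E = n - 1"
  shows "(in_Kplus n V E \<longleftrightarrow> (\<exists>I. independent_set V E I \<and> card I = n))
       \<and> (\<not> in_Kplus n V E \<longrightarrow> brick V E \<and> extendable 1 V E)"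
proof -
  have simple: "simple_graph V E" and card_V: "card V = 2 * n"
    using assms(1) unfolding in_G2n_def by auto
  obtain M where M: "perfect_matching V E M" "alternating_squares E M"
    using extremal_forcing_alternating_squares[OF assms] .
  obtain p where "matching_partner V E M p" using perfect_matching_partner[OF simple M(1)] .
  then interpret square_matching V E M p n
    using card_V M(2) by (simp add: square_matching_def square_matching_axioms_def)
  have Kplus_iff: "in_Kplus n V E \<longleftrightarrow> (\<exists>I. independent_set V E I \<and> card I = n)"
    using Kplus_imp_independent_set independent_set_imp_Kplus by blast
  then show ?thesis using no_independent_imp_brick brick_imp_extendable_1[OF simple] by blast
qed

end
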